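(* Let $F$ be a free group of finite rank $N\ge2$ with free basis $B$, $X$ its Cayley graph with respect to $B$, and $r\in\mathbb{N}$. Let $P$ be a geodesic path in $X$ from $u\in V(X)$ to $v\in V(X)$ passing through the vertices $v_0=u,v_1,\dots,v_m=v$ in this order. Let $T_i\in\mathcal{R}_r(v_i)$ for $i=0,\dots,m$. If $T_{i-1}$ and $T_i$ are connectable for every $i=1,\dots,m$, then $T_0$ and $T_m$ are connectable.
   Context: $X$ is a tree with path metric in which each edge has length one; $\partial F=\partial X$. $\mathcal{H}(\partial F)$ is the set of closed subsets of $\partial F$ with at least two points; for $S\in\mathcal{H}(\partial F)$, $CH(S)$ is the union of all geodesic lines in $X$ joining two points of $S$. $B(v,r)$ is the closed ball of radius $r$ about $v$, and $B(u,v,r)=B(u,r)\cap B(v,r)$. $\mathcal{R}_r(v)$ is the set of subgraphs $T\subset B(v,r)$ with $v\in T$ such that $T=CH(S)\cap B(v,r)$ for some $S\in\mathcal{H}(\partial F)$. For $T_1\in\mathcal{R}_r(u)$ and $T_2\in\mathcal{R}_r(v)$, $T_1$ and $T_2$ are connectable if $T_1\cap B(u,v,r)=T_2\cap B(u,v,r)$ (in particular they are always connectable when $B(u,v,r)=\emptyset$). *)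

theory Defs
  imports Main
begin

(* Elements of F are
   reduced words; a letter is (b, s) with b in B, s = True meaning b^-1.
   The Cayley graph X w.r.t. B has vertex set the reduced words, and
   w is joined to w*x for every letter x; for reduced words w*x is either
   w @ [x] or w with its last letter deleted. *)

type_synonym 'b letter = "'b \<times> bool"
type_synonym 'b vert = "'b letter list"
(* a subgraph: (vertex set, edge set); edges are 2-element vertex sets *)
type_synonym 'b subgraph = "'b vert set \<times> 'b vert set set"

definition letters :: "'b set \<Rightarrow> 'b letter set" where
  "letters B = B \<times> UNIV"

definition cancels :: "'b letter \<Rightarrow> 'b letter \<Rightarrow> bool" where
  "cancels x y \<longleftrightarrow> fst x = fst y \<and> snd x \<noteq> snd y"

definition reduced :: "'b set \<Rightarrow> 'b vert \<Rightarrow> bool" where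
  "reduced B w \<longleftrightarrow> set w \<subseteq> letters B \<and>
     (\<forall>i. Suc i < length w \<longrightarrow> \<not> cancels (w ! i) (w ! Suc i))"

definition VX :: "'b set \<Rightarrow> 'b vert set" where
  "VX B = {w. reduced B w}"

definition adj :: "'b set \<Rightarrow> 'b vert \<Rightarrow> 'b vert \<Rightarrow> bool" where
  "adj B u w \<longleftrightarrow> u \<in> VX B \<and> w \<in> VX B \<and>
     ((\<exists>x. w = u @ [x]) \<or> (\<exists>x. u = w @ [x]))"

definition EdgX :: "'b set \<Rightarrow> 'b vert set set" where
  "EdgX B = {{u, w} | u w. adj B u w}"

definition walk :: "'b set \<Rightarrow> 'b vert \<Rightarrow> 'b vert \<Rightarrow> 'b vert list \<Rightarrow> bool" where
  "walk B u v ps \<longleftrightarrow> ps \<noteq> [] \<and> hd ps = u \<and> last ps = v \<and> set ps \<subseteq> VX B \<and>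
     (\<forall>i. Suc i < length ps \<longrightarrow> adj B (ps ! i) (ps ! Suc i))"

definition dX :: "'b set \<Rightarrow> 'b vert \<Rightarrow> 'b vert \<Rightarrow> nat" where
  "dX B u v = (LEAST n. \<exists>ps. walk B u v ps \<and> length ps = Suc n)"

definition geodesic_path :: "'b set \<Rightarrow> 'b vert \<Rightarrow> 'b vert \<Rightarrow> 'b vert list \<Rightarrow> bool" where
  "geodesic_path B u v vs \<longleftrightarrow> walk B u v vs \<and> length vs = Suc (dX B u v)"

definition bdry :: "'b set \<Rightarrow> (nat \<Rightarrow> 'b letter) set" where
  "bdry B = {\<xi>. (\<forall>n. \<xi> n \<in> letters B) \<and> (\<forall>n. \<not> cancels (\<xi> n) (\<xi> (Suc n)))}"

(* closed subsets of the boundary (cylinder topology) *)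
definition bdry_closed :: "'b set \<Rightarrow> (nat \<Rightarrow> 'b letter) set \<Rightarrow> bool" where
  "bdry_closed B S \<longleftrightarrow> S \<subseteq> bdry B \<and>
     (\<forall>\<xi>\<in>bdry B. (\<forall>k. \<exists>\<eta>\<in>S. \<forall>i<k. \<eta> i = \<xi> i) \<longrightarrow> \<xi> \<in> S)"

definition HF :: "'b set \<Rightarrow> (nat \<Rightarrow> 'b letter) set set" where
  "HF B = {S. bdry_closed B S \<and> (\<exists>\<xi>\<in>S. \<exists>\<eta>\<in>S. \<xi> \<noteq> \<eta>)}"

definition conv_to :: "(nat \<Rightarrow> 'b vert) \<Rightarrow> (nat \<Rightarrow> 'b letter) \<Rightarrow> bool" where
  "conv_to g \<xi> \<longleftrightarrow> (\<forall>k. \<exists>n0. \<forall>n\<ge>n0. k \<le> length (g n) \<and> take k (g n) = map \<xi> [0..<k])"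

definition geod_line :: "'b set \<Rightarrow> (int \<Rightarrow> 'b vert) \<Rightarrow> bool" where
  "geod_line B \<gamma> \<longleftrightarrow> (\<forall>i. \<gamma> i \<in> VX B) \<and> (\<forall>i j. dX B (\<gamma> i) (\<gamma> j) = nat \<bar>i - j\<bar>)"

definition line_joins :: "'b set \<Rightarrow> (int \<Rightarrow> 'b vert) \<Rightarrow> (nat \<Rightarrow> 'b letter) \<Rightarrow> (nat \<Rightarrow> 'b letter) \<Rightarrow> bool" where
  "line_joins B \<gamma> \<xi> \<eta> \<longleftrightarrow> geod_line B \<gamma> \<and>
     conv_to (\<lambda>n. \<gamma> (- int n)) \<xi> \<and> conv_to (\<lambda>n. \<gamma> (int n)) \<eta>"

definition CH :: "'b set \<Rightarrow> (nat \<Rightarrow> 'b letter) set \<Rightarrow> 'b subgraph" where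
  "CH B S =
    ({w. \<exists>\<gamma> \<xi> \<eta> i. \<xi> \<in> S \<and> \<eta> \<in> S \<and> line_joins B \<gamma> \<xi> \<eta> \<and> w = \<gamma> i},
     {e. \<exists>\<gamma> \<xi> \<eta> i. \<xi> \<in> S \<and> \<eta> \<in> S \<and> line_joins B \<gamma> \<xi> \<eta> \<and> e = {\<gamma> i, \<gamma> (i + 1)}})"

definition ballX :: "'b set \<Rightarrow> 'b vert \<Rightarrow> nat \<Rightarrow> 'b subgraph" where
  "ballX B v r = ({w \<in> VX B. dX B v w \<le> r}, {e \<in> EdgX B. \<forall>w\<in>e. dX B v w \<le> r})"

definition ball2X :: "'b set \<Rightarrow> 'b vert \<Rightarrow> 'b vert \<Rightarrow> nat \<Rightarrow> 'b subgraph" where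
  "ball2X B u v r = (fst (ballX B u r) \<inter> fst (ballX B v r), snd (ballX B u r) \<inter> snd (ballX B v r))"

definition sg_inter :: "'b subgraph \<Rightarrow> 'b subgraph \<Rightarrow> 'b subgraph" where
  "sg_inter G H = (fst G \<inter> fst H, snd G \<inter> snd H)"

definition sg_subset :: "'b subgraph \<Rightarrow> 'b subgraph \<Rightarrow> bool" where
  "sg_subset G H \<longleftrightarrow> fst G \<subseteq> fst H \<and> snd G \<subseteq> snd H"

definition Rr :: "'b set \<Rightarrow> nat \<Rightarrow> 'b vert \<Rightarrow> 'b subgraph set" where
  "Rr B r v = {T. sg_subset T (ballX B v r) \<and> v \<in> fst T \<and>
      (\<exists>S\<in>HF B. T = sg_inter (CH B S) (ballX B v r))}"

definition connectable :: "'b set \<Rightarrow> nat \<Rightarrow> 'b vert \<Rightarrow> 'b subgraph \<Rightarrow> 'b vert \<Rightarrow> 'b subgraph \<Rightarrow> bool" where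
  "connectable B r u T1 v T2 \<longleftrightarrow>
     sg_inter T1 (ball2X B u v r) = sg_inter T2 (ball2X B u v r)"

end

theory Submission
  imports Defs "HOL-Library.Sublist"
begin

text \<open>The Cayley graph of a free group is a tree: the distance between reduced words \<open>u\<close> and
  \<open>w\<close> is \<open>|u| + |w| - 2|lcp u w|\<close>. A vertex of a tree has at most one neighbour closer to a
  given vertex \<open>w\<close>, and a geodesic never backtracks, so along a geodesic \<open>v\<^sub>0, \<dots>, v\<^sub>m\<close> the
  distance to \<open>w\<close> has no interior peak and is bounded by its values at the two ends. Hence
  \<open>B(v\<^sub>0, v\<^bsub>j+1\<^esub>, r)\<close> is contained both in \<open>B(v\<^sub>0, v\<^sub>j, r)\<close> and in \<open>B(v\<^sub>j, v\<^bsub>j+1\<^esub>, r)\<close>, and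
  connectability of \<open>T\<^sub>0\<close> with \<open>T\<^sub>m\<close> follows by induction along the path.\<close>

lemma longest_common_prefix_commute:
  "longest_common_prefix xs ys = longest_common_prefix ys xs"
  by (induction xs ys rule: longest_common_prefix.induct) auto

lemma longest_common_prefix_self [simp]: "longest_common_prefix xs xs = xs"
  by (induction xs) auto

lemma longest_common_prefix_eq_prefix:
  "prefix p w \<Longrightarrow> longest_common_prefix w p = p"
  by (simp add: longest_common_prefix_max_prefix longest_common_prefix_prefix2 prefix_order.antisym)

lemma longest_common_prefix_snoc:
  "longest_common_prefix w (p @ [x]) =
     (if prefix (p @ [x]) w then p @ [x] else longest_common_prefix w p)"
proof (cases "prefix (p @ [x]) w")
  case True
  then show ?thesis
    by (simp add: longest_common_prefix_eq_prefix)
next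
  case False
  let ?c = "longest_common_prefix w (p @ [x])"
  have "?c \<noteq> p @ [x]"
    using False longest_common_prefix_prefix1[of w "p @ [x]"] by auto
  then have "prefix ?c p"
    using longest_common_prefix_prefix2[of w "p @ [x]"] by simp
  then have "prefix ?c (longest_common_prefix w p)"
    by (simp add: longest_common_prefix_max_prefix longest_common_prefix_prefix1)
  moreover have "prefix (longest_common_prefix w p) ?c"
    by (intro longest_common_prefix_max_prefix)
      (simp_all add: longest_common_prefix_prefix1 longest_common_prefix_prefix2)
  ultimately show ?thesis
    using False prefix_order.antisym by auto
qed

lemma length_longest_common_prefix_le:
  "length (longest_common_prefix u w) \<le> length u"
  "length (longest_common_prefix u w) \<le> length w"
  by (simp_all add: longest_common_prefix_prefix1 longest_common_prefix_prefix2 prefix_length_le)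

lemma length_longest_common_prefix_min:
  "min (length (longest_common_prefix u a)) (length (longest_common_prefix a v))
     \<le> length (longest_common_prefix u v)"
proof -
  let ?p = "longest_common_prefix u a" and ?q = "longest_common_prefix a v"
  have "prefix ?p a" "prefix ?q a"
    by (simp_all add: longest_common_prefix_prefix1 longest_common_prefix_prefix2)
  then consider "prefix ?p ?q" | "prefix ?q ?p"
    using prefix_same_cases by blast
  then show ?thesis
  proof cases
    case 1
    have "prefix ?p v"
      using 1 longest_common_prefix_prefix2[of a v] by (rule prefix_order.trans)
    then have "prefix ?p (longest_common_prefix u v)"
      by (simp add: longest_common_prefix_max_prefix longest_common_prefix_prefix1)
    then show ?thesis
      using prefix_length_le min.coboundedI1 min.coboundedI2 by blast
  next
    case 2
    have "prefix ?q u"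
      using 2 longest_common_prefix_prefix1[of u a] by (rule prefix_order.trans)
    then have "prefix ?q (longest_common_prefix u v)"
      by (simp add: longest_common_prefix_max_prefix longest_common_prefix_prefix2)
    then show ?thesis
      using prefix_length_le min.coboundedI1 min.coboundedI2 by blast
  qed
qed

text \<open>The path metric of the Cayley graph: from \<open>u\<close> up to the common prefix, then down to \<open>w\<close>.\<close>

definition word_dist :: "'a list \<Rightarrow> 'a list \<Rightarrow> nat" where
  "word_dist u w = length u + length w - 2 * length (longest_common_prefix u w)"

lemma word_dist_commute: "word_dist u w = word_dist w u"
  unfolding word_dist_def by (simp add: longest_common_prefix_commute)

lemma word_dist_self [simp]: "word_dist u u = 0"
  unfolding word_dist_def by simp

lemma word_dist_triangle: "word_dist u v \<le> word_dist u a + word_dist a v"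
  using length_longest_common_prefix_min[of u a v]
    length_longest_common_prefix_le[of u a] length_longest_common_prefix_le[of a v]
    length_longest_common_prefix_le[of u v]
  unfolding word_dist_def min_def by (simp split: if_splits)

lemma word_dist_snoc_prefix:
  assumes "prefix (p @ [x]) w"
  shows "word_dist w p = Suc (word_dist w (p @ [x]))"
proof -
  have "strict_prefix p w"
    using assms by (rule prefix_snocD)
  then have "prefix p w" "length p < length w"
    using prefix_length_less by auto
  then show ?thesis
    using assms unfolding word_dist_def by (simp add: longest_common_prefix_eq_prefix)
qed

lemma word_dist_snoc_not_prefix:
  assumes "\<not> prefix (p @ [x]) w"
  shows "word_dist w (p @ [x]) = Suc (word_dist w p)"
  using assms length_longest_common_prefix_le[of w p]
  unfolding word_dist_def by (simp add: longest_common_prefix_snoc)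

lemma adj_commute: "adj B a b \<longleftrightarrow> adj B b a"
  unfolding adj_def by auto

lemma adj_word_dist:
  assumes "adj B a b"
  shows "word_dist w b = Suc (word_dist w a) \<or> word_dist w a = Suc (word_dist w b)"
proof -
  have "\<exists>p x. {a, b} = {p, p @ [x]}"
    using assms unfolding adj_def by blast
  then obtain p x where "{a, b} = {p, p @ [x]}"
    by blast
  moreover have "word_dist w p = Suc (word_dist w (p @ [x])) \<or>
      word_dist w (p @ [x]) = Suc (word_dist w p)"
    by (cases "prefix (p @ [x]) w")
      (simp_all add: word_dist_snoc_prefix word_dist_snoc_not_prefix)
  ultimately show ?thesis
    by (auto simp: doubleton_eq_iff)
qed

lemma adj_closer_cases:
  assumes "adj B p a" and "word_dist w a < word_dist w p"
  obtains x where "a = p @ [x]" and "prefix a w"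
  | x where "p = a @ [x]" and "\<not> prefix p w"
  using assms word_dist_snoc_prefix word_dist_snoc_not_prefix unfolding adj_def
  by (metis Suc_lessD less_not_refl not_less_eq)

lemma adj_closer_unique:
  assumes "adj B p a" "adj B p c"
    and "word_dist w a < word_dist w p" "word_dist w c < word_dist w p"
  shows "a = c"
  using assms(1,3)
proof (cases rule: adj_closer_cases)
  case (1 x)
  from assms(2,4) show ?thesis
  proof (cases rule: adj_closer_cases)
    case (1 y)
    then show ?thesis
      using \<open>a = p @ [x]\<close> \<open>prefix a w\<close> prefix_length_prefix by fastforce
  next
    case (2 y)
    have "prefix p w"
      using \<open>prefix a w\<close> \<open>a = p @ [x]\<close> prefix_order.trans[of p "p @ [x]" w] by simp
    with 2 show ?thesis
      by simp
  qed
next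
  case (2 x)
  from assms(2,4) show ?thesis
  proof (cases rule: adj_closer_cases)
    case (1 y)
    then show ?thesis
      using \<open>\<not> prefix p w\<close> prefix_order.trans[of p "p @ [y]" w] by simp
  next
    case (2 y)
    then show ?thesis
      using \<open>p = a @ [x]\<close> by simp
  qed
qed

lemma VX_take: "w \<in> VX B \<Longrightarrow> take k w \<in> VX B"
  unfolding VX_def reduced_def by (auto dest: in_set_takeD)

lemma walk_Cons:
  assumes "adj B u (hd ps)" and "walk B (hd ps) v ps"
  shows "walk B u v (u # ps)"
proof -
  have "ps \<noteq> []" and "u \<in> VX B"
    using assms unfolding walk_def adj_def by auto
  with assms show ?thesis
    unfolding walk_def by (auto simp: hd_conv_nth nth_Cons split: nat.split)
qed

lemma walk_from_take:
  assumes "w \<in> VX B" and "k \<le> length w"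
  shows "\<exists>ps. walk B (take k w) w ps \<and> length ps = Suc (length w - k)"
  using assms(2)
proof (induction "length w - k" arbitrary: k)
  case 0
  then show ?case
    using assms(1) by (intro exI[of _ "[w]"]) (simp add: walk_def)
next
  case (Suc n)
  then have "n = length w - Suc k" "Suc k \<le> length w"
    by arith+
  then obtain ps where ps: "walk B (take (Suc k) w) w ps" "length ps = Suc (length w - Suc k)"
    using Suc.hyps(1) by blast
  have "hd ps = take (Suc k) w"
    using ps(1) unfolding walk_def by simp
  moreover have "adj B (take k w) (take (Suc k) w)"
    using VX_take[OF assms(1), of k] VX_take[OF assms(1), of "Suc k"] \<open>Suc k \<le> length w\<close>
    unfolding adj_def by (simp add: take_Suc_conv_app_nth)
  ultimately have "walk B (take k w) w (take k w # ps)"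
    using walk_Cons ps(1) by metis
  then show ?case
    using ps(2) Suc.hyps(2) by (intro exI[of _ "take k w # ps"]) simp
qed

lemma walk_exists:
  assumes "u \<in> VX B" and "w \<in> VX B"
  shows "\<exists>ps. walk B u w ps \<and> length ps = Suc (word_dist u w)"
  using assms(1)
proof (induction u rule: rev_induct)
  case Nil
  then show ?case
    using walk_from_take[OF assms(2), of 0] by (simp add: word_dist_def)
next
  case (snoc x u)
  have "u \<in> VX B"
    using VX_take[OF snoc.prems, of "length u"] by simp
  show ?case
  proof (cases "prefix (u @ [x]) w")
    case True
    then have "take (length (u @ [x])) w = u @ [x]" "length (u @ [x]) \<le> length w"
      by (auto simp: prefix_def)
    moreover have "word_dist (u @ [x]) w = length w - length (u @ [x])"
      using True calculation(2) by (simp add: word_dist_def longest_common_prefix_eq_prefix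
          longest_common_prefix_commute)
    ultimately show ?thesis
      using walk_from_take[OF assms(2), of "length (u @ [x])"] by simp
  next
    case False
    then have "word_dist (u @ [x]) w = Suc (word_dist u w)"
      using word_dist_snoc_not_prefix word_dist_commute by metis
    moreover obtain ps where "walk B u w ps" "length ps = Suc (word_dist u w)"
      using snoc.IH[OF \<open>u \<in> VX B\<close>] by blast
    moreover have "adj B (u @ [x]) u"
      using \<open>u \<in> VX B\<close> snoc.prems unfolding adj_def by simp
    ultimately show ?thesis
      using walk_Cons[of B "u @ [x]" ps w] by (intro exI[of _ "(u @ [x]) # ps"]) (simp add: walk_def)
  qed
qed

lemma walk_word_dist_le:
  assumes "walk B u v ps" and "i \<le> k" and "k < length ps"
  shows "word_dist (ps ! i) (ps ! k) \<le> k - i"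
  using assms(2,3)
proof (induction k)
  case (Suc k)
  show ?case
  proof (cases "i = Suc k")
    case False
    then have "word_dist (ps ! i) (ps ! k) \<le> k - i"
      using Suc by simp
    moreover have "adj B (ps ! k) (ps ! Suc k)"
      using assms(1) Suc.prems unfolding walk_def by simp
    ultimately show ?thesis
      using adj_word_dist[of B "ps ! k" "ps ! Suc k" "ps ! i"] False Suc.prems by auto
  qed simp
qed simp

lemma dX_eq_word_dist:
  assumes "u \<in> VX B" and "w \<in> VX B"
  shows "dX B u w = word_dist u w"
  unfolding dX_def
proof (rule Least_equality)
  show "\<exists>ps. walk B u w ps \<and> length ps = Suc (word_dist u w)"
    using walk_exists[OF assms] .
next
  fix n
  assume "\<exists>ps. walk B u w ps \<and> length ps = Suc n"
  then obtain ps where ps: "walk B u w ps" "length ps = Suc n"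
    by blast
  then have "ps \<noteq> []" "hd ps = u" "last ps = w"
    unfolding walk_def by simp_all
  then have "ps ! 0 = u" "ps ! n = w"
    using ps(2) by (simp_all add: hd_conv_nth last_conv_nth)
  then show "word_dist u w \<le> n"
    using walk_word_dist_le[OF ps(1), of 0 n] ps(2) by simp
qed

lemma geodesic_path_no_backtrack:
  assumes "geodesic_path B u v vs" and "Suc (Suc t) < length vs"
  shows "vs ! t \<noteq> vs ! Suc (Suc t)"
proof
  assume backtrack: "vs ! t = vs ! Suc (Suc t)"
  have walk: "walk B u v vs" and len: "length vs = Suc (dX B u v)"
    using assms(1) unfolding geodesic_path_def by simp_all
  then have "vs \<noteq> []" "hd vs = u" "last vs = v" "u \<in> VX B" "v \<in> VX B"
    unfolding walk_def by auto
  then have ends: "vs ! 0 = u" "vs ! (length vs - 1) = v" "length vs = Suc (word_dist u v)"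
    using len dX_eq_word_dist by (simp_all add: hd_conv_nth last_conv_nth)
  have "word_dist u (vs ! t) \<le> t"
    using walk_word_dist_le[OF walk, of 0 t] assms(2) ends by simp
  moreover have "word_dist (vs ! t) v \<le> length vs - 1 - Suc (Suc t)"
    using walk_word_dist_le[OF walk, of "Suc (Suc t)" "length vs - 1"] assms(2) ends backtrack by simp
  ultimately show False
    using word_dist_triangle[of u v "vs ! t"] ends(3) assms(2) by simp
qed

lemma le_max_endpoints_if_no_peak:
  fixes g :: "nat \<Rightarrow> 'a::linorder"
  assumes "\<And>t. t < n \<Longrightarrow> g t \<noteq> g (Suc t)"
    and "\<And>t. Suc t < n \<Longrightarrow> g t < g (Suc t) \<Longrightarrow> g (Suc (Suc t)) < g (Suc t) \<Longrightarrow> False"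
    and "i \<le> j" and "j \<le> n"
  shows "g j \<le> max (g i) (g n)"
  using assms
proof (induction n arbitrary: j)
  case (Suc n)
  have IH: "g j' \<le> max (g i) (g n)" if "i \<le> j'" "j' \<le> n" for j'
  proof (rule Suc.IH)
    show "\<And>t. t < n \<Longrightarrow> g t \<noteq> g (Suc t)"
      using Suc.prems(1) by simp
    show "\<And>t. Suc t < n \<Longrightarrow> g t < g (Suc t) \<Longrightarrow> g (Suc (Suc t)) < g (Suc t) \<Longrightarrow> False"
      using Suc.prems(2) less_SucI by blast
  qed (use that in auto)
  show ?case
  proof (cases "j = Suc n")
    case False
    then have "j \<le> n"
      using Suc.prems(4) by simp
    have "g n \<le> max (g i) (g (Suc n))"
    proof (rule ccontr)
      assume "\<not> g n \<le> max (g i) (g (Suc n))"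
      then have "g i < g n" "g (Suc n) < g n"
        by (simp_all add: le_max_iff_disj not_le)
      moreover have "i < n"
        using \<open>g i < g n\<close> Suc.prems(3) \<open>j \<le> n\<close> by (cases "i = n") auto
      then obtain p where p: "n = Suc p" "i \<le> p"
        by (cases n) auto
      ultimately have "g p < g n"
        using IH[of p] Suc.prems(1)[of p] by (auto simp: max_def order.strict_iff_order)
      then show False
        using Suc.prems(2)[of p] p \<open>g (Suc n) < g n\<close> by simp
    qed
    then have "max (g i) (g n) \<le> max (g i) (g (Suc n))"
      by simp
    then show ?thesis
      using IH[of j] Suc.prems(3) \<open>j \<le> n\<close> order_trans by blast
  qed simp
qed simp

lemma geodesic_path_dist_le_max:
  assumes geo: "geodesic_path B u v vs" and "i \<le> j" "j \<le> k" "k < length vs"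
    and "w \<in> VX B"
  shows "dX B (vs ! j) w \<le> max (dX B (vs ! i) w) (dX B (vs ! k) w)"
proof -
  have walk: "walk B u v vs"
    using geo unfolding geodesic_path_def by simp
  then have adj: "adj B (vs ! t) (vs ! Suc t)" if "t < k" for t
    using that \<open>k < length vs\<close> unfolding walk_def by simp
  have dX_eq: "dX B (vs ! t) w = word_dist w (vs ! t)" if "t < length vs" for t
    using walk that \<open>w \<in> VX B\<close> dX_eq_word_dist word_dist_commute
    unfolding walk_def by (metis nth_mem subsetD)
  define g where "g t = word_dist w (vs ! t)" for t
  have "g j \<le> max (g i) (g k)"
  proof (rule le_max_endpoints_if_no_peak[where g = g])
    show "g t \<noteq> g (Suc t)" if "t < k" for t
      using adj_word_dist[OF adj[OF that], of w] unfolding g_def by auto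
    show False if "Suc t < k" "g t < g (Suc t)" "g (Suc (Suc t)) < g (Suc t)" for t
    proof -
      have "adj B (vs ! Suc t) (vs ! t)" "adj B (vs ! Suc t) (vs ! Suc (Suc t))"
        using adj[of t] adj[of "Suc t"] that(1) adj_commute by auto
      then have "vs ! t = vs ! Suc (Suc t)"
        using adj_closer_unique that(2,3) unfolding g_def by blast
      then show False
        using geodesic_path_no_backtrack[OF geo] that(1) \<open>k < length vs\<close> by simp
    qed
  qed (use assms in simp_all)
  then show ?thesis
    using assms dX_eq unfolding g_def by simp
qed

lemma EdgX_subset_VX: "e \<in> EdgX B \<Longrightarrow> e \<subseteq> VX B"
  unfolding EdgX_def adj_def by auto

lemma ball2X_subset_ballX_geodesic:
  assumes "geodesic_path B u v vs" and "i \<le> j" "j \<le> k" "k < length vs"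
  shows "sg_subset (ball2X B (vs ! i) (vs ! k) r) (ballX B (vs ! j) r)"
  using geodesic_path_dist_le_max[OF assms] EdgX_subset_VX
  unfolding sg_subset_def ball2X_def ballX_def by fastforce

lemma sg_inter_eq_on_subset:
  assumes "sg_inter T1 Y = sg_inter T2 Y" and "sg_subset X Y"
  shows "sg_inter T1 X = sg_inter T2 X"
  using assms unfolding sg_inter_def sg_subset_def by (simp add: prod_eq_iff) blast

theorem mainTheorem5:
  fixes B :: "'b set" and N r m :: nat and u v :: "'b vert"
    and vs :: "'b vert list" and T :: "nat \<Rightarrow> 'b subgraph"
  assumes "finite B" and "card B = N" and "N \<ge> 2"
    and "u \<in> VX B" and "v \<in> VX B"
    and "geodesic_path B u v vs" and "length vs = Suc m"
    and "\<forall>i\<le>m. T i \<in> Rr B r (vs ! i)"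
    and "\<forall>i\<in>{1..m}. connectable B r (vs ! (i - 1)) (T (i - 1)) (vs ! i) (T i)"
  shows "connectable B r (vs ! 0) (T 0) (vs ! m) (T m)"
proof -
  have "connectable B r (vs ! 0) (T 0) (vs ! j) (T j)" if "j \<le> m" for j
    using that
  proof (induction j)
    case (Suc j)
    let ?ball2 = "\<lambda>a b. ball2X B (vs ! a) (vs ! b) r"
    have "sg_subset (?ball2 0 (Suc j)) (?ball2 0 j)"
      and "sg_subset (?ball2 0 (Suc j)) (?ball2 j (Suc j))"
      using ball2X_subset_ballX_geodesic[OF assms(6), of 0 j "Suc j" r] Suc.prems assms(7)
      unfolding sg_subset_def ball2X_def by auto
    moreover have "sg_inter (T 0) (?ball2 0 j) = sg_inter (T j) (?ball2 0 j)"
      and "sg_inter (T j) (?ball2 j (Suc j)) = sg_inter (T (Suc j)) (?ball2 j (Suc j))"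
      using Suc bspec[OF assms(9), of "Suc j"] unfolding connectable_def by simp_all
    ultimately show ?case
      unfolding connectable_def using sg_inter_eq_on_subset by metis
  qed (simp add: connectable_def)
  then show ?thesis
    by simp
qed

end
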